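(* Let $\Theta=\{\theta_1,\dots,\theta_n\}$ with $n\ge 2$, and suppose the pair $(\mathcal{E},C)$ satisfies Assumption (A) below. Then there exists a contract $(u,d)$ with $u>0,d>0$ that screens the uninformed Bob. That is, $W(\mu)\ge 0$ for every prior $\mu\in\Delta$, while $$\sup_{\sigma\in\Delta}\ \min_{1\le j\le n}\,(u-d\,\sigma_j)<0.$$ Assumption (A): there exist $\varepsilon>0$, $\eta>0$ and $T\in\mathbb{R}_+$ such that for every $\mu\in\Delta$ with $\|\mu-\mathbf{\tfrac1n}\|<\eta$ there is an experiment $E_\mu\in\mathcal{E}$ with $\Upsilon(E_\mu,\mu)>\varepsilon$ and $C(E_\mu,\mu)\le T$. Here $\mathbf{\tfrac1n}$ denotes the uniform distribution $(1/n,\dots,1/n)$.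
   Context: **States and beliefs.** $\Theta=\{\theta_1,\dots,\theta_n\}$ is a finite set of states. $\Delta=\Delta(\Theta)$ is the simplex of probability vectors $\mu=(\mu_1,\dots,\mu_n)$. **Experiments.** An experiment is a pair $E=(S,\chi)$, where $S$ is a measurable signal space and $\chi(\theta_i)=P_i$ is a probability measure on $S$. Fix a $\sigma$-finite measure $\nu$ on $S$ dominating $P_1,\dots,P_n$, and let $p_i=dP_i/d\nu$. Define $$\Upsilon(E,\mu)=\min_i \mu_i-\int_S \min_i\{\mu_i p_i(s)\}\,d\nu(s),$$ which does not depend on the choice of $\nu$. $\mathcal{E}$ is a given set of available experiments. $C:\mathcal{E}\times\Delta\to\mathbb{R}_+\cup\{\infty\}$ is a cost functional, with $C(E,\mu)$ the cost of experiment $E$ to a Bob with prior $\mu$. **Contract.** A contract is a pair $(u,d)$ with $u>0$ and $d>0$. Bob either rejects (payoff $0$) or accepts. If he accepts, he receives $u$ and announces a state (possibly at random). The true state is then drawn, and Bob pays $d$ if the announced state is the realized state. **Informed Bob.** The informed Bob has a prior $\mu\in\Delta$ and is an expected-utility maximizer. He may either acquire no information, or acquire one experiment $E\in\mathcal{E}$ at cost $C(E,\mu)$ and observe its signal. He then announces a state of minimal posterior probability. His optimal payoff from accepting is $$W(\mu)=\max\Big\{u-d\min_i\mu_i,\ \sup_{E\in\mathcal{E}}\Big[u-d\int_S\min_i\{\mu_ip_i(s)\}\,d\nu(s)-C(E,\mu)\Big]\Big\}.$$ He (weakly) prefers to accept iff $W(\mu)\ge 0$. **Uninformed Bob.** The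 uninformed Bob cannot acquire information. He evaluates a randomized announcement $\sigma\in\Delta$ by its worst-case payoff over states, $\min_j(u-d\sigma_j)$. He strictly prefers to reject iff $\sup_{\sigma\in\Delta}\min_j(u-d\sigma_j)<0$. **Screening.** A contract screens the uninformed Bob if the informed Bob prefers to accept it for every prior $\mu\in\Delta$, and the uninformed Bob strictly prefers to reject it. *)

theory Defs
  imports "HOL-Probability.Probability"
begin

definition belief_simplex :: "('n::finite \<Rightarrow> real) set" where
  "belief_simplex = {\<mu>. (\<forall>i. 0 \<le> \<mu> i) \<and> (\<Sum>i\<in>UNIV. \<mu> i) = 1}"

definition uniform_belief :: "'n::finite \<Rightarrow> real" where
  "uniform_belief = (\<lambda>i. 1 / real CARD('n))"

definition euclid_dist :: "('n::finite \<Rightarrow> real) \<Rightarrow> ('n \<Rightarrow> real) \<Rightarrow> real" where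
  "euclid_dist \<mu> \<nu> = sqrt (\<Sum>i\<in>UNIV. (\<mu> i - \<nu> i)^2)"

(* An experiment is represented by a dominating sigma-finite measure nu on the
  signal space together with densities p i = dP_i/dnu; the signal distribution in
  state i is P_i = density nu (p i), required to be a probability measure. *)

type_synonym ('s, 'n) exper = "'s measure \<times> ('n \<Rightarrow> 's \<Rightarrow> real)"

definition is_experiment :: "('s, 'n) exper \<Rightarrow> bool" where
  "is_experiment E \<longleftrightarrow>
     sigma_finite_measure (fst E) \<and>
     (\<forall>i. snd E i \<in> borel_measurable (fst E) \<and> (\<forall>s\<in>space (fst E). 0 \<le> snd E i s) \<and>
          prob_space (density (fst E) (\<lambda>s. ennreal (snd E i s))))"

definition signal_dist :: "('s, 'n) exper \<Rightarrow> 'n \<Rightarrow> 's measure" where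
  "signal_dist E i = density (fst E) (\<lambda>s. ennreal (snd E i s))"

definition min_integral :: "('s, 'n::finite) exper \<Rightarrow> ('n \<Rightarrow> real) \<Rightarrow> real" where
  "min_integral E \<mu> = (\<integral>s. Min ((\<lambda>i. \<mu> i * snd E i s) ` UNIV) \<partial>(fst E))"

definition Upsilon :: "('s, 'n::finite) exper \<Rightarrow> ('n \<Rightarrow> real) \<Rightarrow> real" where
  "Upsilon E \<mu> = Min (\<mu> ` UNIV) - min_integral E \<mu>"

(* Optimal payoff of the informed Bob from accepting (u,d); costs in [0,infinity]. *)
definition W_val :: "('s, 'n::finite) exper set \<Rightarrow> (('s, 'n) exper \<Rightarrow> ('n \<Rightarrow> real) \<Rightarrow> ereal)
     \<Rightarrow> real \<Rightarrow> real \<Rightarrow> ('n \<Rightarrow> real) \<Rightarrow> ereal" where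
  "W_val \<E> C u d \<mu> = max (ereal (u - d * Min (\<mu> ` UNIV)))
      (SUP E\<in>\<E>. ereal (u - d * min_integral E \<mu>) - C E \<mu>)"

definition uninformed_value :: "real \<Rightarrow> real \<Rightarrow> 'n::finite itself \<Rightarrow> real" where
  "uninformed_value u d _ = (SUP \<sigma>\<in>(belief_simplex :: ('n \<Rightarrow> real) set). Min ((\<lambda>j. u - d * \<sigma> j) ` UNIV))"

definition assumption_A :: "('s, 'n::finite) exper set \<Rightarrow> (('s, 'n) exper \<Rightarrow> ('n \<Rightarrow> real) \<Rightarrow> ereal) \<Rightarrow> bool" where
  "assumption_A \<E> C \<longleftrightarrow> (\<exists>\<epsilon>>0. \<exists>\<eta>>0. \<exists>T\<ge>0. \<forall>\<mu>\<in>belief_simplex. euclid_dist \<mu> uniform_belief < \<eta> \<longrightarrow>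
       (\<exists>E\<in>\<E>. Upsilon E \<mu> > \<epsilon> \<and> C E \<mu> \<le> ereal T))"

definition screens :: "('s, 'n::finite) exper set \<Rightarrow> (('s, 'n) exper \<Rightarrow> ('n \<Rightarrow> real) \<Rightarrow> ereal)
     \<Rightarrow> real \<Rightarrow> real \<Rightarrow> bool" where
  "screens \<E> C u d \<longleftrightarrow> (\<forall>\<mu>\<in>belief_simplex. W_val \<E> C u d \<mu> \<ge> 0) \<and> uninformed_value u d TYPE('n) < 0"

end

theory Submission
  imports Defs
begin

text \<open>Take the contract \<open>d = 2(T + 1)/\<epsilon>\<close> and \<open>u = d (1/n - t)\<close> for a small \<open>t > 0\<close>.
  Any announcement loses \<open>d\<close> with probability at least \<open>1/n\<close> in some state, so the
  uninformed Bob's value is at most \<open>u - d/n = -d t < 0\<close>. An informed Bob whose least likely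
  state has probability at most \<open>1/n - t\<close> accepts even without information; otherwise his
  prior is close to uniform, and the experiment of Assumption (A) lowers his expected loss
  by more than \<open>d \<epsilon>\<close>, which pays for its cost \<open>T\<close> and for the margin \<open>d t \<le> d \<epsilon>/2\<close>.\<close>

lemma belief_simplex_Min_le_uniform:
  assumes "(\<mu>::'n::finite \<Rightarrow> real) \<in> belief_simplex"
  shows "Min (range \<mu>) \<le> 1 / real CARD('n)"
proof -
  have "real CARD('n) * Min (range \<mu>) \<le> (\<Sum>i\<in>UNIV. \<mu> i)"
    by (rule sum_bounded_below) simp
  with assms show ?thesis
    by (simp add: belief_simplex_def field_simps)
qed

lemma belief_simplex_Max_ge_uniform:
  assumes "(\<mu>::'n::finite \<Rightarrow> real) \<in> belief_simplex"
  shows "1 / real CARD('n) \<le> Max (range \<mu>)"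
proof -
  have "(\<Sum>i\<in>UNIV. \<mu> i) \<le> real CARD('n) * Max (range \<mu>)"
    by (rule sum_bounded_above) simp
  with assms show ?thesis
    by (simp add: belief_simplex_def field_simps)
qed

lemma sum_abs_diff_le_of_lower_bound:
  fixes f g :: "'a \<Rightarrow> real"
  assumes "sum f A = sum g A" and "\<And>i. i \<in> A \<Longrightarrow> g i - t \<le> f i" and "0 \<le> t"
  shows "(\<Sum>i\<in>A. \<bar>f i - g i\<bar>) \<le> 2 * t * card A"
proof -
  have "(\<Sum>i\<in>A. \<bar>f i - g i\<bar>) \<le> (\<Sum>i\<in>A. (f i - g i) + 2 * t)"
    using assms(2,3) by (intro sum_mono) fastforce
  also have "\<dots> = 2 * t * card A"
    using assms(1) by (simp add: sum.distrib sum_subtractf)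
  finally show ?thesis .
qed

lemma euclid_dist_le_sum_abs: "euclid_dist \<mu> \<nu> \<le> (\<Sum>i\<in>UNIV. \<bar>\<mu> i - \<nu> i\<bar>)"
  using L2_set_le_sum_abs[of "\<lambda>i. \<mu> i - \<nu> i" UNIV]
  by (simp add: euclid_dist_def L2_set_def)

lemma euclid_dist_uniform_le:
  assumes "(\<mu>::'n::finite \<Rightarrow> real) \<in> belief_simplex"
    and "\<And>i. 1 / real CARD('n) - t \<le> \<mu> i" and "0 \<le> t"
  shows "euclid_dist \<mu> uniform_belief \<le> 2 * t * CARD('n)"
proof -
  have "sum \<mu> UNIV = sum uniform_belief UNIV"
    using assms(1) by (simp add: belief_simplex_def uniform_belief_def)
  then have "(\<Sum>i\<in>UNIV. \<bar>\<mu> i - uniform_belief i\<bar>) \<le> 2 * t * CARD('n)"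
    using assms(2,3) by (intro sum_abs_diff_le_of_lower_bound) (auto simp: uniform_belief_def)
  then show ?thesis
    using euclid_dist_le_sum_abs order_trans by blast
qed

lemma uninformed_value_le:
  assumes "0 \<le> d"
  shows "uninformed_value u d TYPE('n::finite) \<le> u - d / real CARD('n)"
  unfolding uninformed_value_def
proof (rule cSUP_least)
  show "(belief_simplex :: ('n \<Rightarrow> real) set) \<noteq> {}"
    by (auto simp: belief_simplex_def uniform_belief_def intro!: exI[of _ uniform_belief])
next
  fix \<sigma> :: "'n \<Rightarrow> real"
  assume "\<sigma> \<in> belief_simplex"
  obtain j where j: "\<sigma> j = Max (range \<sigma>)"
    by (metis Max_in UNIV_not_empty finite finite_imageI image_iff image_is_empty)
  have "Min ((\<lambda>j. u - d * \<sigma> j) ` UNIV) \<le> u - d * \<sigma> j"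
    by (rule Min_le) auto
  also have "\<dots> \<le> u - d * (1 / real CARD('n))"
    using mult_left_mono[OF belief_simplex_Max_ge_uniform[OF \<open>\<sigma> \<in> belief_simplex\<close>] assms] j
    by simp
  finally show "Min ((\<lambda>j. u - d * \<sigma> j) ` UNIV) \<le> u - d / real CARD('n)"
    by simp
qed

lemma W_val_ge_uninformed: "ereal (u - d * Min (range \<mu>)) \<le> W_val \<E> C u d \<mu>"
  by (simp add: W_val_def)

lemma W_val_ge_experiment:
  "E \<in> \<E> \<Longrightarrow> ereal (u - d * min_integral E \<mu>) - C E \<mu> \<le> W_val \<E> C u d \<mu>"
  unfolding W_val_def by (rule max.coboundedI2, rule SUP_upper)

lemma informed_payoff_ge:
  fixes \<mu> :: "'n::finite \<Rightarrow> real"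
  assumes "\<mu> \<in> belief_simplex" and "0 \<le> d"
    and "\<epsilon> < Upsilon E \<mu>" and "C E \<mu> \<le> ereal T"
  shows "ereal (u - d / real CARD('n) + d * \<epsilon> - T)
    \<le> ereal (u - d * min_integral E \<mu>) - C E \<mu>"
proof -
  have "min_integral E \<mu> \<le> 1 / real CARD('n) - \<epsilon>"
    using assms(3) belief_simplex_Min_le_uniform[OF assms(1)] by (simp add: Upsilon_def)
  then have "u - d / real CARD('n) + d * \<epsilon> \<le> u - d * min_integral E \<mu>"
    using mult_left_mono[OF _ assms(2)] by (fastforce simp: algebra_simps)
  then have "ereal (u - d / real CARD('n) + d * \<epsilon>) - ereal T
      \<le> ereal (u - d * min_integral E \<mu>) - C E \<mu>"
    using assms(4) by (intro ereal_minus_mono) simp_all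
  then show ?thesis
    by simp
qed

lemma screens_of_local_experiments:
  fixes \<E> :: "('s, 'n::finite) exper set"
  assumes "0 < t" "0 < d" "T \<le> d * (\<epsilon> - t)"
    and local_exp: "\<And>\<mu>. \<mu> \<in> belief_simplex \<Longrightarrow> (\<And>i. 1 / real CARD('n) - t < \<mu> i) \<Longrightarrow>
      \<exists>E\<in>\<E>. \<epsilon> < Upsilon E \<mu> \<and> C E \<mu> \<le> ereal T"
  shows "screens \<E> C (d * (1 / real CARD('n) - t)) d"
proof -
  define u where "u = d * (1 / real CARD('n) - t)"
  have "0 \<le> W_val \<E> C u d \<mu>" if \<mu>: "\<mu> \<in> belief_simplex" for \<mu>
  proof (cases "Min (range \<mu>) \<le> 1 / real CARD('n) - t")
    case True
    then have "0 \<le> ereal (u - d * Min (range \<mu>))"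
      using \<open>0 < d\<close> by (simp add: u_def mult_left_mono)
    also have "\<dots> \<le> W_val \<E> C u d \<mu>"
      by (rule W_val_ge_uninformed)
    finally show ?thesis .
  next
    case False
    then have close: "\<And>i. 1 / real CARD('n) - t < \<mu> i"
      by (metis Min_le UNIV_I finite finite_imageI image_eqI linorder_not_le order.strict_trans2)
    then obtain E where "E \<in> \<E>" and E: "\<epsilon> < Upsilon E \<mu>" "C E \<mu> \<le> ereal T"
      using local_exp[OF \<mu> close] by blast
    have "0 \<le> ereal (u - d / real CARD('n) + d * \<epsilon> - T)"
      using assms(3) by (simp add: u_def algebra_simps)
    also have "\<dots> \<le> ereal (u - d * min_integral E \<mu>) - C E \<mu>"
      using \<mu> E \<open>0 < d\<close> by (intro informed_payoff_ge) simp_all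
    also have "\<dots> \<le> W_val \<E> C u d \<mu>"
      using \<open>E \<in> \<E>\<close> by (rule W_val_ge_experiment)
    finally show ?thesis .
  qed
  moreover have "uninformed_value u d TYPE('n) \<le> u - d / real CARD('n)"
    using \<open>0 < d\<close> by (intro uninformed_value_le) simp
  then have "uninformed_value u d TYPE('n) < 0"
    using mult_pos_pos[OF \<open>0 < d\<close> \<open>0 < t\<close>] by (simp add: u_def algebra_simps)
  ultimately show ?thesis
    by (simp add: screens_def u_def)
qed

lemma screening_parameters:
  fixes N :: real
  assumes "1 \<le> N" "0 < \<epsilon>" "0 < \<eta>" "0 \<le> T"
  obtains t d where "0 < t" "0 < d" "t < 1 / N" "2 * t * N < \<eta>" "T \<le> d * (\<epsilon> - t)"
proof
  define t where "t = min (\<eta> / (4 * N)) (min (\<epsilon> / 2) (1 / (2 * N)))"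
  define d where "d = 2 * (T + 1) / \<epsilon>"
  have t: "0 < t" "t \<le> \<eta> / (4 * N)" "t \<le> \<epsilon> / 2" "t \<le> 1 / (2 * N)"
    using assms by (auto simp: t_def)
  then show "0 < t" "t < 1 / N" "2 * t * N < \<eta>"
    using assms by (auto simp: field_simps)
  show "0 < d"
    using assms by (simp add: d_def)
  have "d * \<epsilon> = 2 * (T + 1)"
    using assms by (simp add: d_def)
  then show "T \<le> d * (\<epsilon> - t)"
    using mult_left_mono[OF t(3), of d] \<open>0 < d\<close> by (simp add: right_diff_distrib)
qed

theorem theorem1:
  fixes \<E> :: "('s, 'n::finite) exper set"
    and C :: "('s, 'n) exper \<Rightarrow> ('n \<Rightarrow> real) \<Rightarrow> ereal"
  assumes "CARD('n) \<ge> 2"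
    and "\<forall>E\<in>\<E>. is_experiment E"
    and "\<forall>E \<mu>. C E \<mu> \<ge> 0"
    and "assumption_A \<E> C"
  shows "\<exists>u d. u > 0 \<and> d > 0 \<and> screens \<E> C u d"
proof -
  define N where "N = real CARD('n)"
  obtain \<epsilon> \<eta> T where "0 < \<epsilon>" "0 < \<eta>" "0 \<le> T" and A:
    "\<forall>\<mu>\<in>belief_simplex. euclid_dist \<mu> uniform_belief < \<eta> \<longrightarrow>
       (\<exists>E\<in>\<E>. \<epsilon> < Upsilon E \<mu> \<and> C E \<mu> \<le> ereal T)"
    using assms(4) unfolding assumption_A_def by blast
  have "1 \<le> N" by (simp add: N_def)
  then obtain t d where "0 < t" "0 < d" "t < 1 / N" "2 * t * N < \<eta>" "T \<le> d * (\<epsilon> - t)"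
    using \<open>0 < \<epsilon>\<close> \<open>0 < \<eta>\<close> \<open>0 \<le> T\<close> by (rule screening_parameters)
  have "screens \<E> C (d * (1 / N - t)) d"
    unfolding N_def
  proof (rule screens_of_local_experiments[OF \<open>0 < t\<close> \<open>0 < d\<close> \<open>T \<le> d * (\<epsilon> - t)\<close>])
    fix \<mu> :: "'n \<Rightarrow> real"
    assume "\<mu> \<in> belief_simplex" "\<And>i. 1 / real CARD('n) - t < \<mu> i"
    then have "euclid_dist \<mu> uniform_belief < \<eta>"
      using euclid_dist_uniform_le[of \<mu> t] \<open>0 < t\<close> \<open>2 * t * N < \<eta>\<close>
      by (fastforce simp: N_def less_imp_le)
    with A \<open>\<mu> \<in> belief_simplex\<close> show "\<exists>E\<in>\<E>. \<epsilon> < Upsilon E \<mu> \<and> C E \<mu> \<le> ereal T"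
      by blast
  qed
  moreover have "0 < d * (1 / N - t)"
    using \<open>0 < d\<close> \<open>t < 1 / N\<close> by simp
  ultimately show ?thesis
    using \<open>0 < d\<close> by blast
qed

end
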